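(* Let $A$ be an edge matrix over $\mathcal G$. Then $R_A=\overline{\operatorname{span}}\{\rho_i,\delta_i:i\in\mathcal G\}$ and $\mathfrak R_A=\operatorname{span}_{\mathbb Z}\{\rho_i,\delta_i:i\in\mathcal G\}$ (the additive group generated by the $\rho_i$ and $\delta_i$).
   Context: An edge matrix is a $0$-$1$ matrix $A$ whose index set $\mathcal G$ is the edge set of a directed graph, with $A(i,j)=1$ if the range of edge $i$ equals the source of edge $j$, and $A(i,j)=0$ otherwise. For $i\in\mathcal G$, $\rho_i(j)=A(i,j)$ is the $i$-th row of $A$ as a function on $\mathcal G$ and $\delta_i$ is the indicator function of $\{i\}$. $R_A$ is the $C^*$-subalgebra of $\ell^\infty(\mathcal G)$ generated by $\{\rho_i,\delta_i:i\in\mathcal G\}$, and $\mathfrak R_A$ is the subring of $\mathbb Z^{\mathcal G}$ generated by the same functions. *)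

theory Defs
  imports "HOL-Analysis.Analysis"
begin

text \<open>A directed graph with edge set the type 'e, source map src and range map rng.
  The edge matrix: A(i,j) = 1 iff rng i = src j.\<close>

definition edge_matrix :: "('e \<Rightarrow> 'v) \<Rightarrow> ('e \<Rightarrow> 'v) \<Rightarrow> 'e \<Rightarrow> 'e \<Rightarrow> 'a::zero_neq_one" where
  "edge_matrix src rng i j = (if rng i = src j then 1 else 0)"

definition row_fn :: "('e \<Rightarrow> 'v) \<Rightarrow> ('e \<Rightarrow> 'v) \<Rightarrow> 'e \<Rightarrow> 'e \<Rightarrow> 'a::zero_neq_one" where
  "row_fn src rng i = (\<lambda>j. edge_matrix src rng i j)"

definition delta_fn :: "'e \<Rightarrow> 'e \<Rightarrow> 'a::zero_neq_one" where
  "delta_fn i = (\<lambda>j. if j = i then 1 else 0)"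

definition gens :: "('e \<Rightarrow> 'v) \<Rightarrow> ('e \<Rightarrow> 'v) \<Rightarrow> ('e \<Rightarrow> 'a::zero_neq_one) set" where
  "gens src rng = {row_fn src rng i | i. True} \<union> {delta_fn i | i. True}"

definition linfty :: "('e \<Rightarrow> complex) set" where
  "linfty = {f. bounded (range f)}"

definition sup_closure :: "('e \<Rightarrow> complex) set \<Rightarrow> ('e \<Rightarrow> complex) set" where
  "sup_closure S = {f \<in> linfty. \<forall>\<epsilon>>0. \<exists>g\<in>S. \<forall>x. norm (f x - g x) \<le> \<epsilon>}"

definition is_cstar_subalgebra :: "('e \<Rightarrow> complex) set \<Rightarrow> bool" where
  "is_cstar_subalgebra S \<longleftrightarrow> S \<subseteq> linfty \<and> (\<lambda>_. 0) \<in> S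
     \<and> (\<forall>f\<in>S. \<forall>g\<in>S. (\<lambda>x. f x + g x) \<in> S)
     \<and> (\<forall>c. \<forall>f\<in>S. (\<lambda>x. c * f x) \<in> S)
     \<and> (\<forall>f\<in>S. \<forall>g\<in>S. (\<lambda>x. f x * g x) \<in> S)
     \<and> (\<forall>f\<in>S. (\<lambda>x. cnj (f x)) \<in> S)
     \<and> sup_closure S \<subseteq> S"

definition cstar_generated :: "('e \<Rightarrow> complex) set \<Rightarrow> ('e \<Rightarrow> complex) set" where
  "cstar_generated X = \<Inter> {S. is_cstar_subalgebra S \<and> X \<subseteq> S}"

definition is_subring_fun :: "('e \<Rightarrow> int) set \<Rightarrow> bool" where
  "is_subring_fun S \<longleftrightarrow> (\<lambda>_. 0) \<in> S
     \<and> (\<forall>f\<in>S. \<forall>g\<in>S. (\<lambda>x. f x + g x) \<in> S)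
     \<and> (\<forall>f\<in>S. (\<lambda>x. - f x) \<in> S)
     \<and> (\<forall>f\<in>S. \<forall>g\<in>S. (\<lambda>x. f x * g x) \<in> S)"

definition ring_generated :: "('e \<Rightarrow> int) set \<Rightarrow> ('e \<Rightarrow> int) set" where
  "ring_generated X = \<Inter> {S. is_subring_fun S \<and> X \<subseteq> S}"

definition fun_span :: "('e \<Rightarrow> 'a::comm_ring) set \<Rightarrow> ('e \<Rightarrow> 'a) set" where
  "fun_span X = {(\<lambda>x. \<Sum>g\<in>F. c g * g x) | F c. finite F \<and> F \<subseteq> X}"

abbreviation R_A :: "('e \<Rightarrow> 'v) \<Rightarrow> ('e \<Rightarrow> 'v) \<Rightarrow> ('e \<Rightarrow> complex) set" where
  "R_A src rng \<equiv> cstar_generated (gens src rng)"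

abbreviation frakR_A :: "('e \<Rightarrow> 'v) \<Rightarrow> ('e \<Rightarrow> 'v) \<Rightarrow> ('e \<Rightarrow> int) set" where
  "frakR_A src rng \<equiv> ring_generated (gens src rng)"

end

theory Submission
  imports Defs "HOL-Library.Function_Algebras"
begin

(* The product of two generators is a scalar multiple of a generator:
   rho_i rho_j = [rng i = rng j] rho_i,  rho_i delta_j = A(i,j) delta_j,  delta_i delta_j = [i = j] delta_i.
   By bilinearity the linear span of the generators is therefore closed under multiplication, and
   it is closed under conjugation because the generators are 0-1 valued. Over the integers this
   makes the span a ring, so it is the ring generated. Over the complex numbers the algebraic
   operations are continuous for the sup norm, so the uniform closure of the span is a
   C*-algebra; it contains the generators and lies in every C*-algebra containing them. *)

lemma sum_fun_apply: "sum f A x = (\<Sum>a\<in>A. f a x)"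
  by (induction A rule: infinite_finite_induct) auto

interpretation fun_module: module "\<lambda>(c::'a::comm_ring_1) (f::'e \<Rightarrow> 'a) x. c * f x"
  by unfold_locales (auto simp: fun_eq_iff algebra_simps)

lemma fun_module_subspace_iff:
  "fun_module.subspace S \<longleftrightarrow> (\<lambda>_. 0) \<in> S \<and> (\<forall>f\<in>S. \<forall>g\<in>S. (\<lambda>x. f x + g x) \<in> S)
     \<and> (\<forall>c. \<forall>f\<in>S. (\<lambda>x. c * f x) \<in> S)"
  by (simp add: fun_module.subspace_def zero_fun_def plus_fun_def)

lemma fun_span_eq_span: "fun_span X = fun_module.span X"
  unfolding fun_span_def fun_module.span_explicit by (auto simp: sum_fun_apply fun_eq_iff)

lemma fun_module_subspace_fun_span:
  fixes X :: "('e \<Rightarrow> 'a::comm_ring_1) set"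
  shows "fun_module.subspace (fun_span X)"
  by (simp add: fun_span_eq_span)

lemma fun_span_zero:
  fixes X :: "('e \<Rightarrow> 'a::comm_ring_1) set"
  shows "(\<lambda>_. 0) \<in> fun_span X"
  using fun_module_subspace_fun_span[of X] by (simp add: fun_module_subspace_iff)

lemma fun_span_add:
  fixes X :: "('e \<Rightarrow> 'a::comm_ring_1) set"
  shows "f \<in> fun_span X \<Longrightarrow> g \<in> fun_span X \<Longrightarrow> (\<lambda>x. f x + g x) \<in> fun_span X"
  using fun_module_subspace_fun_span[of X] by (simp add: fun_module_subspace_iff)

lemma fun_span_scale:
  fixes X :: "('e \<Rightarrow> 'a::comm_ring_1) set"
  shows "f \<in> fun_span X \<Longrightarrow> (\<lambda>x. c * f x) \<in> fun_span X"
  using fun_module_subspace_fun_span[of X] by (simp add: fun_module_subspace_iff)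

lemma fun_span_superset:
  fixes X :: "('e \<Rightarrow> 'a::comm_ring_1) set"
  shows "X \<subseteq> fun_span X"
  by (simp add: fun_span_eq_span fun_module.span_superset)

lemma fun_span_minimal:
  fixes X :: "('e \<Rightarrow> 'a::comm_ring_1) set"
  shows "X \<subseteq> S \<Longrightarrow> fun_module.subspace S \<Longrightarrow> fun_span X \<subseteq> S"
  by (simp add: fun_span_eq_span fun_module.span_minimal)

lemma fun_span_mult:
  fixes X :: "('e \<Rightarrow> 'a::comm_ring_1) set"
  assumes X: "\<And>g h. g \<in> X \<Longrightarrow> h \<in> X \<Longrightarrow> (\<lambda>x. g x * h x) \<in> fun_span X"
    and "f \<in> fun_span X" "h \<in> fun_span X"
  shows "(\<lambda>x. f x * h x) \<in> fun_span X"
proof -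
  \<comment> \<open>Extend from generators to the span one factor at a time.\<close>
  have closed: "fun_module.subspace {f. \<forall>h\<in>Y. (\<lambda>x. f x * h x) \<in> fun_span X}" for Y
    by (simp add: fun_module_subspace_iff distrib_right mult.assoc fun_span_zero fun_span_add fun_span_scale)
  have "X \<subseteq> {f. \<forall>g\<in>X. (\<lambda>x. f x * g x) \<in> fun_span X}"
    using X by blast
  then have "fun_span X \<subseteq> {f. \<forall>g\<in>X. (\<lambda>x. f x * g x) \<in> fun_span X}"
    using closed by (rule fun_span_minimal)
  then have "X \<subseteq> {g. \<forall>f\<in>fun_span X. (\<lambda>x. g x * f x) \<in> fun_span X}"
    by (subst mult.commute) blast
  then have "fun_span X \<subseteq> {g. \<forall>f\<in>fun_span X. (\<lambda>x. g x * f x) \<in> fun_span X}"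
    using closed by (rule fun_span_minimal)
  then show ?thesis
    using assms(2,3) by blast
qed

lemma linfty_iff_norm_bounded: "f \<in> linfty \<longleftrightarrow> (\<exists>B. \<forall>x. norm (f x) \<le> B)"
  unfolding linfty_def bounded_iff by auto

lemma fun_module_subspace_linfty: "fun_module.subspace linfty"
proof -
  have "bounded (range (\<lambda>x. c * f x))" if "bounded (range f)" for c and f :: "'e \<Rightarrow> complex"
    using bounded_linear_image[OF that bounded_linear_mult_right, of c] by (simp add: image_image)
  then show ?thesis
    unfolding fun_module_subspace_iff linfty_def by (auto intro: bounded_plus_comp)
qed

lemma fun_span_cnj:
  assumes "\<And>g. g \<in> X \<Longrightarrow> (\<lambda>x. cnj (g x)) \<in> fun_span X" and "f \<in> fun_span X"
  shows "(\<lambda>x. cnj (f x)) \<in> fun_span X"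
proof -
  have "fun_module.subspace {f. (\<lambda>x. cnj (f x)) \<in> fun_span X}"
    by (simp add: fun_module_subspace_iff fun_span_zero fun_span_add fun_span_scale)
  then have "fun_span X \<subseteq> {f. (\<lambda>x. cnj (f x)) \<in> fun_span X}"
    using assms(1) by (intro fun_span_minimal) auto
  then show ?thesis
    using assms(2) by blast
qed

lemma is_subring_fun_imp_subspace:
  assumes "is_subring_fun S"
  shows "fun_module.subspace S"
proof -
  have zero: "(\<lambda>_. 0) \<in> S" and add: "\<And>f g. f \<in> S \<Longrightarrow> g \<in> S \<Longrightarrow> (\<lambda>x. f x + g x) \<in> S"
    and uminus: "\<And>f. f \<in> S \<Longrightarrow> (\<lambda>x. - f x) \<in> S"
    using assms unfolding is_subring_fun_def by blast+
  have nat_mult: "(\<lambda>x. int n * f x) \<in> S" if "f \<in> S" for n f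
  proof (induction n)
    case (Suc n)
    have "(\<lambda>x. int n * f x + f x) \<in> S"
      by (rule add[OF Suc that])
    then show ?case
      by (simp add: algebra_simps)
  qed (simp add: zero)
  have "(\<lambda>x. c * f x) \<in> S" if "f \<in> S" for c f
  proof (cases "c \<ge> 0")
    case True
    then show ?thesis using nat_mult[OF that, of "nat c"] by simp
  next
    case False
    then show ?thesis using uminus[OF nat_mult[OF that, of "nat (- c)"]] by simp
  qed
  then show ?thesis
    using zero add by (simp add: fun_module_subspace_iff)
qed

lemma ring_generated_eq_fun_span:
  fixes X :: "('e \<Rightarrow> int) set"
  assumes "\<And>g h. g \<in> X \<Longrightarrow> h \<in> X \<Longrightarrow> (\<lambda>x. g x * h x) \<in> fun_span X"
  shows "ring_generated X = fun_span X"
proof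
  have "(\<lambda>x. f x * g x) \<in> fun_span X" if "f \<in> fun_span X" "g \<in> fun_span X" for f g
    using assms that by (rule fun_span_mult)
  moreover have "(\<lambda>x. - f x) \<in> fun_span X" if "f \<in> fun_span X" for f
    using fun_span_scale[OF that, of "- 1"] by simp
  ultimately have "is_subring_fun (fun_span X)"
    unfolding is_subring_fun_def by (simp add: fun_span_zero fun_span_add)
  then show "ring_generated X \<subseteq> fun_span X"
    unfolding ring_generated_def using fun_span_superset by blast
  show "fun_span X \<subseteq> ring_generated X"
    unfolding ring_generated_def
  proof (rule Inter_greatest)
    fix S assume "S \<in> {S. is_subring_fun S \<and> X \<subseteq> S}"
    then show "fun_span X \<subseteq> S"
      using fun_span_minimal is_subring_fun_imp_subspace by blast
  qed
qed

lemma sup_closure_subset_linfty: "sup_closure S \<subseteq> linfty"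
  unfolding sup_closure_def by blast

lemma sup_closure_superset: "S \<subseteq> linfty \<Longrightarrow> S \<subseteq> sup_closure S"
  unfolding sup_closure_def by (auto intro!: bexI)

lemma sup_closure_mono: "S \<subseteq> T \<Longrightarrow> sup_closure S \<subseteq> sup_closure T"
  unfolding sup_closure_def by blast

lemma sup_closure_idem: "sup_closure (sup_closure S) = sup_closure S"
proof
  show "sup_closure S \<subseteq> sup_closure (sup_closure S)"
    by (rule sup_closure_superset[OF sup_closure_subset_linfty])
  show "sup_closure (sup_closure S) \<subseteq> sup_closure S"
  proof
    fix f assume f: "f \<in> sup_closure (sup_closure S)"
    have "\<exists>g\<in>S. \<forall>x. norm (f x - g x) \<le> e" if "e > 0" for e
    proof -
      have "e / 2 > 0"
        using \<open>e > 0\<close> by simp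
      then obtain h where h: "h \<in> sup_closure S" "\<forall>x. norm (f x - h x) \<le> e / 2"
        using f unfolding sup_closure_def by blast
      obtain g where g: "g \<in> S" "\<forall>x. norm (h x - g x) \<le> e / 2"
        using h(1) \<open>e / 2 > 0\<close> unfolding sup_closure_def by blast
      have "norm (f x - g x) \<le> e" for x
        using norm_diff_triangle_le[of "f x" "h x" "e / 2" "g x" "e / 2"] h(2) g(2) by simp
      then show ?thesis
        using g(1) by blast
    qed
    then show "f \<in> sup_closure S"
      using f unfolding sup_closure_def by blast
  qed
qed

lemma sup_closure_uniform_limitE:
  assumes f: "f \<in> sup_closure S"
  obtains g where "\<And>n. g n \<in> S" and "uniform_limit UNIV g f sequentially"
proof -
  have "\<exists>g. g \<in> S \<and> (\<forall>x. norm (f x - g x) \<le> 1 / Suc n)" for n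
  proof -
    have "1 / real (Suc n) > 0"
      by simp
    then show ?thesis
      using f unfolding sup_closure_def by blast
  qed
  then obtain g where g: "\<And>n. g n \<in> S" "\<And>n x. norm (f x - g n x) \<le> 1 / Suc n"
    using choice[of "\<lambda>n g. g \<in> S \<and> (\<forall>x. norm (f x - g x) \<le> 1 / Suc n)"] by blast
  have "uniform_limit UNIV g f sequentially"
    unfolding uniform_limit_sequentially_iff
  proof (intro allI impI)
    fix e :: real assume "e > 0"
    then obtain N :: nat where N: "1 / Suc N < e"
      by (rule nat_approx_posE)
    have "dist (g n x) (f x) < e" if "n \<ge> N" for n x
    proof -
      have "1 / real (Suc n) \<le> 1 / Suc N"
        using that by (intro divide_left_mono) auto
      then show ?thesis
        using g(2)[of x n] N by (simp add: dist_norm norm_minus_commute)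
    qed
    then show "\<exists>N. \<forall>n\<ge>N. \<forall>x\<in>UNIV. dist (g n x) (f x) < e"
      by blast
  qed
  with g(1) show thesis
    by (rule that)
qed

lemma sup_closure_uniform_limitI:
  assumes "S \<subseteq> linfty" and lim: "uniform_limit UNIV g f sequentially" and g: "\<And>n. g n \<in> S"
  shows "f \<in> sup_closure S"
proof -
  have approx: "\<exists>g\<in>S. \<forall>x. norm (f x - g x) \<le> e" if "e > 0" for e
  proof -
    obtain N where "\<forall>x. dist (g N x) (f x) < e"
      using lim \<open>e > 0\<close> unfolding uniform_limit_sequentially_iff by blast
    then have "\<forall>x. norm (f x - g N x) \<le> e"
      by (metis dist_commute dist_norm less_imp_le)
    then show ?thesis
      using g[of N] by blast
  qed
  obtain h where h: "h \<in> S" "\<forall>x. norm (f x - h x) \<le> 1"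
    using approx[of 1] by auto
  then have "h \<in> linfty"
    using assms(1) by blast
  then obtain B where "\<forall>x. norm (h x) \<le> B"
    by (auto simp: linfty_iff_norm_bounded)
  with h(2) have "\<forall>x. norm (f x) \<le> B + 1"
    by (smt (verit) norm_triangle_sub)
  then show "f \<in> sup_closure S"
    using approx unfolding sup_closure_def linfty_iff_norm_bounded by blast
qed

lemma is_cstar_subalgebra_sup_closure:
  assumes S: "S \<subseteq> linfty" and "(\<lambda>_. 0) \<in> S"
    and add: "\<And>f g. f \<in> S \<Longrightarrow> g \<in> S \<Longrightarrow> (\<lambda>x. f x + g x) \<in> S"
    and scale: "\<And>c f. f \<in> S \<Longrightarrow> (\<lambda>x. c * f x) \<in> S"
    and mult: "\<And>f g. f \<in> S \<Longrightarrow> g \<in> S \<Longrightarrow> (\<lambda>x. f x * g x) \<in> S"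
    and cnj: "\<And>f. f \<in> S \<Longrightarrow> (\<lambda>x. cnj (f x)) \<in> S"
  shows "is_cstar_subalgebra (sup_closure S)"
  unfolding is_cstar_subalgebra_def
proof (intro conjI ballI allI)
  have bounded: "bounded (range f)" if "f \<in> sup_closure S" for f
    using that sup_closure_subset_linfty unfolding linfty_def by blast
  show "sup_closure S \<subseteq> linfty"
    by (rule sup_closure_subset_linfty)
  show "(\<lambda>_. 0) \<in> sup_closure S"
    using assms(1,2) sup_closure_superset by blast
  show "sup_closure (sup_closure S) \<subseteq> sup_closure S"
    by (simp add: sup_closure_idem)
  fix f assume f: "f \<in> sup_closure S"
  obtain g where g: "\<And>n. g n \<in> S" "uniform_limit UNIV g f sequentially"
    using sup_closure_uniform_limitE[OF f] by blast
  show "(\<lambda>x. c * f x) \<in> sup_closure S" for c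
    by (rule sup_closure_uniform_limitI[OF S bounded_linear.uniform_limit[OF bounded_linear_mult_right g(2)]])
      (rule scale[OF g(1)])
  show "(\<lambda>x. cnj (f x)) \<in> sup_closure S"
    by (rule sup_closure_uniform_limitI[OF S bounded_linear.uniform_limit[OF bounded_linear_cnj g(2)]])
      (rule cnj[OF g(1)])
  fix h assume h: "h \<in> sup_closure S"
  obtain k where k: "\<And>n. k n \<in> S" "uniform_limit UNIV k h sequentially"
    using sup_closure_uniform_limitE[OF h] by blast
  show "(\<lambda>x. f x + h x) \<in> sup_closure S"
    by (rule sup_closure_uniform_limitI[OF S uniform_limit_add[OF g(2) k(2)]])
      (rule add[OF g(1) k(1)])
  show "(\<lambda>x. f x * h x) \<in> sup_closure S"
    by (rule sup_closure_uniform_limitI[OF S uniform_lim_mult[OF g(2) k(2) bounded[OF f] bounded[OF h]]])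
      (rule mult[OF g(1) k(1)])
qed

lemma is_cstar_subalgebra_imp_subspace: "is_cstar_subalgebra S \<Longrightarrow> fun_module.subspace S"
  unfolding is_cstar_subalgebra_def fun_module_subspace_iff by blast

lemma cstar_generated_eq_sup_closure_fun_span:
  assumes "X \<subseteq> linfty"
    and "\<And>g h. g \<in> X \<Longrightarrow> h \<in> X \<Longrightarrow> (\<lambda>x. g x * h x) \<in> fun_span X"
    and "\<And>g. g \<in> X \<Longrightarrow> (\<lambda>x. cnj (g x)) \<in> fun_span X"
  shows "cstar_generated X = sup_closure (fun_span X)"
proof
  have span_linfty: "fun_span X \<subseteq> linfty"
    using assms(1) fun_module_subspace_linfty by (rule fun_span_minimal)
  have "(\<lambda>x. f x * g x) \<in> fun_span X" if "f \<in> fun_span X" "g \<in> fun_span X" for f g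
    using assms(2) that by (rule fun_span_mult)
  moreover have "(\<lambda>x. cnj (f x)) \<in> fun_span X" if "f \<in> fun_span X" for f
    using assms(3) that by (rule fun_span_cnj)
  ultimately have "is_cstar_subalgebra (sup_closure (fun_span X))"
    using span_linfty fun_span_zero fun_span_add fun_span_scale
    by (intro is_cstar_subalgebra_sup_closure)
  moreover have "X \<subseteq> sup_closure (fun_span X)"
    using fun_span_superset sup_closure_superset[OF span_linfty] by blast
  ultimately show "cstar_generated X \<subseteq> sup_closure (fun_span X)"
    unfolding cstar_generated_def by blast
  show "sup_closure (fun_span X) \<subseteq> cstar_generated X"
    unfolding cstar_generated_def
  proof (rule Inter_greatest)
    fix S assume S: "S \<in> {S. is_cstar_subalgebra S \<and> X \<subseteq> S}"
    then have "fun_span X \<subseteq> S"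
      using fun_span_minimal is_cstar_subalgebra_imp_subspace by blast
    then have "sup_closure (fun_span X) \<subseteq> sup_closure S"
      by (rule sup_closure_mono)
    also have "\<dots> \<subseteq> S"
      using S by (simp add: is_cstar_subalgebra_def)
    finally show "sup_closure (fun_span X) \<subseteq> S" .
  qed
qed

lemma gens_zero_or_one: "g \<in> gens src rng \<Longrightarrow> g x = 0 \<or> g x = 1"
  unfolding gens_def row_fn_def edge_matrix_def delta_fn_def by auto

lemma gens_mult_in_fun_span:
  fixes src rng :: "'e \<Rightarrow> 'v"
  assumes "g \<in> (gens src rng :: ('e \<Rightarrow> 'a::comm_ring_1) set)" and "h \<in> gens src rng"
  shows "(\<lambda>x. g x * h x) \<in> fun_span (gens src rng)"
proof -
  let ?G = "gens src rng :: ('e \<Rightarrow> 'a) set"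
  have scaled: "(\<lambda>x. a * k x) \<in> fun_span ?G" if "k \<in> ?G" for a k
    using that fun_span_superset by (blast intro: fun_span_scale)
  have row: "row_fn src rng i \<in> ?G" and delta: "delta_fn i \<in> ?G" for i
    unfolding gens_def by blast+
  consider (row_row) i j where "g = row_fn src rng i" "h = row_fn src rng j"
    | (row_delta) i j where "g = row_fn src rng i" "h = delta_fn j"
    | (delta_row) i j where "g = delta_fn i" "h = row_fn src rng j"
    | (delta_delta) i j where "g = delta_fn i" "h = delta_fn j"
    using assms unfolding gens_def by blast
  then show ?thesis
  proof cases
    case row_row
    then have "(\<lambda>x. g x * h x) = (\<lambda>x. (if rng i = rng j then 1 else 0) * row_fn src rng i x)"
      by (auto simp: row_fn_def edge_matrix_def fun_eq_iff)
    then show ?thesis using scaled[OF row] by simp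
  next
    case row_delta
    then have "(\<lambda>x. g x * h x) = (\<lambda>x. edge_matrix src rng i j * delta_fn j x)"
      by (auto simp: row_fn_def delta_fn_def fun_eq_iff)
    then show ?thesis using scaled[OF delta] by simp
  next
    case delta_row
    then have "(\<lambda>x. g x * h x) = (\<lambda>x. edge_matrix src rng j i * delta_fn i x)"
      by (auto simp: row_fn_def delta_fn_def fun_eq_iff)
    then show ?thesis using scaled[OF delta] by simp
  next
    case delta_delta
    then have "(\<lambda>x. g x * h x) = (\<lambda>x. (if i = j then 1 else 0) * delta_fn i x)"
      by (auto simp: delta_fn_def fun_eq_iff)
    then show ?thesis using scaled[OF delta] by simp
  qed
qed

lemma gens_cnj:
  assumes "g \<in> gens src rng"
  shows "(\<lambda>x. cnj (g x)) = g"
proof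
  show "cnj (g x) = g x" for x
    using gens_zero_or_one[OF assms, of x] by auto
qed

lemma gens_subset_linfty: "(gens src rng :: ('e \<Rightarrow> complex) set) \<subseteq> linfty"
proof
  fix g :: "'e \<Rightarrow> complex" assume "g \<in> gens src rng"
  then have "\<forall>x. norm (g x) \<le> 1"
    using gens_zero_or_one[OF \<open>g \<in> gens src rng\<close>] by (metis norm_one norm_zero zero_le_one order_refl)
  then show "g \<in> linfty"
    unfolding linfty_iff_norm_bounded by blast
qed

theorem proposition5p1:
  fixes src rng :: "'e \<Rightarrow> 'v"
  shows "R_A src rng = sup_closure (fun_span (gens src rng)) \<and>
         frakR_A src rng = fun_span (gens src rng)"
proof
  show "R_A src rng = sup_closure (fun_span (gens src rng))"
  proof (rule cstar_generated_eq_sup_closure_fun_span)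
    show "(\<lambda>x. cnj (g x)) \<in> fun_span (gens src rng)" if "g \<in> gens src rng" for g
      using that fun_span_superset by (auto simp: gens_cnj)
  qed (simp_all add: gens_subset_linfty gens_mult_in_fun_span)
  show "frakR_A src rng = fun_span (gens src rng)"
    using gens_mult_in_fun_span by (rule ring_generated_eq_fun_span)
qed

end
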